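(* For every integer $m\geq 3$, the graph $C_m[4]$ has a $C_m$-factorization, i.e. its edge set can be partitioned into $C_m$-factors.
   Context: For a graph $G$ and a positive integer $k$, $G[k]$ is the graph with vertex set $V(G)\times\{0,1,\dots,k-1\}$ in which $(u,i)$ and $(w,j)$ are adjacent if and only if $uw\in E(G)$. $C_m$ is the cycle of length $m$. A $C_k$-factor of a graph is a spanning subgraph each of whose components is a cycle of length $k$; a $C_k$-factorization is a partition of the edge set into $C_k$-factors. *)

theory Defs
  imports Main
begin

definition cycle_verts :: "nat \<Rightarrow> nat set" where
  "cycle_verts m = {0..<m}"

definition cycle_edges :: "nat \<Rightarrow> nat set set" where
  "cycle_edges m = {{i, (i + 1) mod m} | i. i < m}"

definition lex_verts :: "'a set \<Rightarrow> nat \<Rightarrow> ('a \<times> nat) set" where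
  "lex_verts V k = V \<times> {0..<k}"

definition lex_edges :: "'a set set \<Rightarrow> nat \<Rightarrow> ('a \<times> nat) set set" where
  "lex_edges E k = {{(u, i), (w, j)} | u w i j. {u, w} \<in> E \<and> i < k \<and> j < k}"

definition cyc_of_list :: "'a list \<Rightarrow> 'a set set" where
  "cyc_of_list vs = {{vs ! i, vs ! ((i + 1) mod length vs)} | i. i < length vs}"

definition is_Ck_factor :: "nat \<Rightarrow> 'a set \<Rightarrow> 'a set set \<Rightarrow> 'a set set \<Rightarrow> bool" where
  "is_Ck_factor m V E F \<longleftrightarrow> F \<subseteq> E \<and>
     (\<exists>Cs :: 'a list set.
        (\<forall>vs\<in>Cs. distinct vs \<and> length vs = m \<and> set vs \<subseteq> V) \<and>
        (\<forall>vs\<in>Cs. \<forall>ws\<in>Cs. set vs \<inter> set ws \<noteq> {} \<longrightarrow> set vs = set ws \<and> cyc_of_list vs = cyc_of_list ws) \<and>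
        (\<Union>vs\<in>Cs. set vs) = V \<and>
        F = (\<Union>vs\<in>Cs. cyc_of_list vs))"

definition has_Ck_factorization :: "nat \<Rightarrow> 'a set \<Rightarrow> 'a set set \<Rightarrow> bool" where
  "has_Ck_factorization m V E \<longleftrightarrow>
     (\<exists>\<F> :: 'a set set set.
        (\<forall>F\<in>\<F>. is_Ck_factor m V E F) \<and>
        (\<forall>F\<in>\<F>. \<forall>F'\<in>\<F>. F \<noteq> F' \<longrightarrow> F \<inter> F' = {}) \<and>
        \<Union>\<F> = E)"

end

theory Submission
  imports Defs
begin

text \<open>Identify the \<open>2\<^sup>n\<close> copies of a vertex of \<open>C\<^sub>m\<close> with the group \<open>{..<2\<^sup>n}\<close> under
  \<open>XOR\<close>. A labelling \<open>label f i\<close> yields, for each \<open>f\<close>, the factor consisting of the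
  cycles \<open>(0, j \<oplus> label f 0), \<dots>, (m - 1, j \<oplus> label f (m - 1))\<close> for all \<open>j\<close>. This factor
  contains the lifted edge \<open>{(i, a), (i + 1, b)}\<close> exactly when
  \<open>a \<oplus> b = label f i \<oplus> label f (i + 1)\<close>, so the factors partition the edge set as soon as
  every step map \<open>f \<mapsto> label f i \<oplus> label f (i + 1)\<close> is a permutation.
  For \<open>n = 2\<close> alternating labels \<open>0, f, 0, f, \<dots>\<close> make every step the identity when \<open>m\<close>
  is even. For odd \<open>m\<close> the last label is replaced by \<open>\<rho> f\<close>, where \<open>\<rho>\<close> cyclically
  permutes \<open>1, 2, 3\<close>; the two steps around it become \<open>f \<oplus> \<rho> f\<close> and \<open>\<rho> f\<close>, which
  are again permutations.\<close>

unbundle bit_operations_syntax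

lemma xor_right_cancel_iff:
  fixes a b c :: "'a::semiring_bit_operations"
  shows "a XOR c = b XOR c \<longleftrightarrow> a = b"
  by (metis xor.assoc xor_self_eq xor.right_neutral)

lemma xor_self_left:
  fixes a b :: "'a::semiring_bit_operations"
  shows "a XOR (a XOR b) = b"
  by (simp flip: xor.assoc)

lemma xor_cancel_left_common:
  fixes a b c :: "'a::semiring_bit_operations"
  shows "(c XOR a) XOR (c XOR b) = a XOR b"
  by (metis xor.assoc xor.left_commute xor_self_left)

lemma xor_less_two_pow:
  fixes a b :: nat
  assumes "a < 2 ^ n" "b < 2 ^ n"
  shows "a XOR b < 2 ^ n"
  using assms by (metis take_bit_nat_eq_self_iff take_bit_xor)

lemma cycle_successor_not_mutual:
  fixes i k m :: nat
  assumes "3 \<le> m" "i < m" "i = (k + 1) mod m" "k = (i + 1) mod m"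
  shows False
proof -
  have "i mod m = ((i + 1) mod m + 1) mod m"
    using assms(2,3) unfolding assms(4) by simp
  also have "\<dots> = (i + 2) mod m"
    by (simp add: mod_Suc_eq)
  finally have "m dvd (i + 2) - i"
    by (subst mod_eq_dvd_iff_nat[symmetric]) simp_all
  then show False
    using assms(1) by (auto dest: dvd_imp_le)
qed

lemma lifted_cycle_edge_eq_iff:
  fixes m i k :: nat
  assumes "3 \<le> m" "i < m" "k < m"
  shows "{(i, a), ((i + 1) mod m, b)} = {(k, c), ((k + 1) mod m, d)} \<longleftrightarrow> i = k \<and> a = c \<and> b = d"
  using cycle_successor_not_mutual[OF assms(1,2)] cycle_successor_not_mutual[OF assms(1,3)]
  by (auto simp: doubleton_eq_iff)

lemma lex_cycle_edgeE:
  assumes "x \<in> lex_edges (cycle_edges m) k"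
  obtains i a b where "i < m" "a < k" "b < k" "x = {(i, a), ((i + 1) mod m, b)}"
proof -
  obtain u w a b where x: "x = {(u, a), (w, b)}" "{u, w} \<in> cycle_edges m" "a < k" "b < k"
    using assms unfolding lex_edges_def by auto
  then obtain i where i: "i < m" "{u, w} = {i, (i + 1) mod m}"
    unfolding cycle_edges_def by auto
  then consider "u = i" "w = (i + 1) mod m" | "u = (i + 1) mod m" "w = i"
    by (auto simp: doubleton_eq_iff)
  then show thesis
    using that i(1) x by cases (auto simp: insert_commute)
qed

locale xor_cycle_labelling =
  fixes m n :: nat and label :: "nat \<Rightarrow> nat \<Rightarrow> nat"
  assumes three_le_m: "3 \<le> m"
    and label_less: "f < 2 ^ n \<Longrightarrow> label f i < 2 ^ n"
    and bij_label_step: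
      "i < m \<Longrightarrow> bij_betw (\<lambda>f. label f i XOR label f ((i + 1) mod m)) {..<2 ^ n} {..<2 ^ n}"
begin

abbreviation V :: "(nat \<times> nat) set" where
  "V \<equiv> lex_verts (cycle_verts m) (2 ^ n)"

abbreviation E :: "(nat \<times> nat) set set" where
  "E \<equiv> lex_edges (cycle_edges m) (2 ^ n)"

definition label_cycle :: "nat \<Rightarrow> nat \<Rightarrow> (nat \<times> nat) list" where
  "label_cycle f j = map (\<lambda>i. (i, j XOR label f i)) [0..<m]"

definition factor :: "nat \<Rightarrow> (nat \<times> nat) set set" where
  "factor f = (\<Union>j<2 ^ n. cyc_of_list (label_cycle f j))"

lemma set_label_cycle: "set (label_cycle f j) = {(i, j XOR label f i) | i. i < m}"
  unfolding label_cycle_def by auto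

lemma cyc_of_list_label_cycle:
  "cyc_of_list (label_cycle f j) =
     {{(i, j XOR label f i), ((i + 1) mod m, j XOR label f ((i + 1) mod m))} | i. i < m}"
proof -
  have "length (label_cycle f j) = m"
    by (simp add: label_cycle_def)
  moreover have "label_cycle f j ! i = (i, j XOR label f i)" if "i < m" for i
    using that by (simp add: label_cycle_def)
  moreover have "0 < m"
    using three_le_m by simp
  ultimately show ?thesis
    unfolding cyc_of_list_def by (intro Collect_cong ex_cong1) (auto simp: label_cycle_def)
qed

lemma mem_factor_iff:
  assumes "i < m" "a < 2 ^ n" "f < 2 ^ n"
  shows "{(i, a), ((i + 1) mod m, b)} \<in> factor f \<longleftrightarrow> a XOR b = label f i XOR label f ((i + 1) mod m)"
    (is "?edge \<in> _ \<longleftrightarrow> _ = ?step")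
proof
  assume "?edge \<in> factor f"
  then obtain j k where k: "k < m"
    "?edge = {(k, j XOR label f k), ((k + 1) mod m, j XOR label f ((k + 1) mod m))}"
    unfolding factor_def cyc_of_list_label_cycle by blast
  have "i = k \<and> a = j XOR label f k \<and> b = j XOR label f ((k + 1) mod m)"
    using k(2) unfolding lifted_cycle_edge_eq_iff[OF three_le_m assms(1) k(1)] .
  then show "a XOR b = ?step"
    by (simp add: xor_cancel_left_common)
next
  assume step: "a XOR b = ?step"
  define j where "j = a XOR label f i"
  have "j < 2 ^ n"
    using assms(2,3) by (simp add: j_def xor_less_two_pow label_less)
  moreover have "a = j XOR label f i"
    by (simp add: j_def xor.assoc)
  moreover have "b = j XOR label f ((i + 1) mod m)"
    using step by (metis j_def xor.assoc xor_self_left)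
  ultimately show "?edge \<in> factor f"
    unfolding factor_def cyc_of_list_label_cycle using assms(1) by blast
qed

lemma factor_subset:
  assumes "f < 2 ^ n"
  shows "factor f \<subseteq> E"
proof
  fix x assume "x \<in> factor f"
  then obtain j i where ji: "j < 2 ^ n" "i < m"
    "x = {(i, j XOR label f i), ((i + 1) mod m, j XOR label f ((i + 1) mod m))}"
    unfolding factor_def cyc_of_list_label_cycle by blast
  have "{i, (i + 1) mod m} \<in> cycle_edges m"
    using ji(2) by (auto simp: cycle_edges_def)
  moreover have "j XOR label f k < 2 ^ n" for k
    using ji(1) assms by (simp add: xor_less_two_pow label_less)
  ultimately show "x \<in> E"
    unfolding lex_edges_def ji(3) by blast
qed

lemma is_Ck_factor_factor:
  assumes f: "f < 2 ^ n"
  shows "is_Ck_factor m V E (factor f)"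
  unfolding is_Ck_factor_def
proof (intro conjI exI)
  let ?Cs = "label_cycle f ` {..<2 ^ n}"
  show "factor f \<subseteq> E"
    using factor_subset[OF f] .
  show "\<forall>vs\<in>?Cs. distinct vs \<and> length vs = m \<and> set vs \<subseteq> V"
    using label_less[OF f] xor_less_two_pow
    by (auto simp: label_cycle_def distinct_map inj_on_def lex_verts_def cycle_verts_def)
  show "\<forall>vs\<in>?Cs. \<forall>ws\<in>?Cs. set vs \<inter> set ws \<noteq> {} \<longrightarrow> set vs = set ws \<and> cyc_of_list vs = cyc_of_list ws"
    by (auto simp: set_label_cycle xor_right_cancel_iff)
  show "(\<Union>vs\<in>?Cs. set vs) = V"
  proof
    show "(\<Union>vs\<in>?Cs. set vs) \<subseteq> V"
      using label_less[OF f] xor_less_two_pow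
      by (auto simp: set_label_cycle lex_verts_def cycle_verts_def)
  next
    show "V \<subseteq> (\<Union>vs\<in>?Cs. set vs)"
    proof
      fix x assume "x \<in> V"
      then obtain i a where x: "x = (i, a)" "i < m" "a < 2 ^ n"
        unfolding lex_verts_def cycle_verts_def by auto
      define j where "j = a XOR label f i"
      have "j < 2 ^ n"
        unfolding j_def using x(3) label_less[OF f] xor_less_two_pow by blast
      moreover have "x \<in> set (label_cycle f j)"
        unfolding set_label_cycle j_def using x by (auto simp: xor.assoc)
      ultimately show "x \<in> (\<Union>vs\<in>?Cs. set vs)"
        by auto
    qed
  qed
  show "factor f = (\<Union>vs\<in>?Cs. cyc_of_list vs)"
    unfolding factor_def by simp
qed

lemma factor_disjoint:
  assumes "f < 2 ^ n" "g < 2 ^ n" "f \<noteq> g"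
  shows "factor f \<inter> factor g = {}"
proof (rule ccontr)
  assume "factor f \<inter> factor g \<noteq> {}"
  then obtain x where x: "x \<in> factor f" "x \<in> factor g"
    by blast
  then obtain i a b where i: "i < m" "a < 2 ^ n" "x = {(i, a), ((i + 1) mod m, b)}"
    using factor_subset[OF assms(1)] by (blast elim: lex_cycle_edgeE)
  have "label f i XOR label f ((i + 1) mod m) = label g i XOR label g ((i + 1) mod m)"
    using x mem_factor_iff[OF i(1,2)] assms(1,2) unfolding i(3) by simp
  then show False
    using bij_label_step[OF i(1)] assms by (auto simp: bij_betw_def inj_on_def)
qed

lemma Union_factor: "(\<Union>f<2 ^ n. factor f) = E"
proof
  show "(\<Union>f<2 ^ n. factor f) \<subseteq> E"
    using factor_subset by blast
next
  show "E \<subseteq> (\<Union>f<2 ^ n. factor f)"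
  proof
    fix x assume "x \<in> E"
    then obtain i a b where i: "i < m" "a < 2 ^ n" "b < 2 ^ n" "x = {(i, a), ((i + 1) mod m, b)}"
      by (rule lex_cycle_edgeE)
    have "a XOR b \<in> (\<lambda>f. label f i XOR label f ((i + 1) mod m)) ` {..<2 ^ n}"
      using bij_betw_imp_surj_on[OF bij_label_step[OF i(1)]] xor_less_two_pow[OF i(2,3)] by simp
    then obtain f where "f < 2 ^ n" "a XOR b = label f i XOR label f ((i + 1) mod m)"
      by auto
    then have "x \<in> factor f"
      using mem_factor_iff[OF i(1,2)] i(4) by simp
    then show "x \<in> (\<Union>f<2 ^ n. factor f)"
      using \<open>f < 2 ^ n\<close> by blast
  qed
qed

theorem has_Ck_factorization: "has_Ck_factorization m V E"
  unfolding has_Ck_factorization_def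
  using is_Ck_factor_factor factor_disjoint Union_factor
  by (intro exI[of _ "factor ` {..<2 ^ n}"]) blast

end

definition rotate123 :: "nat \<Rightarrow> nat" where
  "rotate123 f = (if f = 1 then 2 else if f = 2 then 3 else if f = 3 then 1 else 0)"

definition Cm4_label :: "nat \<Rightarrow> nat \<Rightarrow> nat \<Rightarrow> nat" where
  "Cm4_label m f i = (if i = m - 1 then (if even m then f else rotate123 f) else if odd i then f else 0)"

lemma bij_rotate123: "bij_betw rotate123 {..<4} {..<4}"
  by (simp add: bij_betw_def inj_on_def rotate123_def lessThan_nat_numeral lessThan_Suc insert_commute)

lemma bij_xor_rotate123: "bij_betw (\<lambda>f. f XOR rotate123 f) {..<4} {..<4}"
  by (simp add: bij_betw_def inj_on_def rotate123_def lessThan_nat_numeral lessThan_Suc insert_commute)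

lemma Cm4_label_step_cases:
  fixes m i :: nat
  assumes "3 \<le> m" "i < m"
  obtains "\<And>f. Cm4_label m f i XOR Cm4_label m f ((i + 1) mod m) = f"
    | "\<And>f. Cm4_label m f i XOR Cm4_label m f ((i + 1) mod m) = f XOR rotate123 f"
    | "\<And>f. Cm4_label m f i XOR Cm4_label m f ((i + 1) mod m) = rotate123 f"
proof -
  consider "i + 1 < m - 1" | "i = m - 2" | "i = m - 1"
    using assms by linarith
  then show thesis
  proof cases
    case 1
    then show thesis
      using that(1) by (auto simp: Cm4_label_def)
  next
    case 2
    then have "(i + 1) mod m = m - 1"
      using assms by simp
    then show thesis
      using that(1,2) 2 assms by (cases "even m") (auto simp: Cm4_label_def)
  next
    case 3
    then have "(i + 1) mod m = 0"
      using assms by simp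
    then show thesis
      using that(1,3) 3 assms by (cases "even m") (auto simp: Cm4_label_def)
  qed
qed

lemma xor_cycle_labelling_Cm4_label:
  assumes "3 \<le> m"
  shows "xor_cycle_labelling m 2 (Cm4_label m)"
proof
  show "3 \<le> m"
    using assms .
  show "Cm4_label m f i < 2 ^ 2" if "f < 2 ^ 2" for f i
    using that by (simp add: Cm4_label_def rotate123_def)
  show "bij_betw (\<lambda>f. Cm4_label m f i XOR Cm4_label m f ((i + 1) mod m)) {..<2 ^ 2} {..<2 ^ 2}"
    if "i < m" for i
    using Cm4_label_step_cases[OF assms that] bij_xor_rotate123 bij_rotate123
    by cases (simp_all add: bij_betw_id[unfolded id_def])
qed

theorem mainTheorem3:
  fixes m :: nat
  assumes "m \<ge> 3"
  shows "has_Ck_factorization m (lex_verts (cycle_verts m) 4) (lex_edges (cycle_edges m) 4)"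
  using xor_cycle_labelling.has_Ck_factorization[OF xor_cycle_labelling_Cm4_label[OF assms]]
  by simp

end
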